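(* Let $B$ be a noetherian normal integral domain and $A$ a subring of $B$. Suppose that $(\operatorname{Frac}A,\operatorname{Frac}B)\in\mathrm{EXT}$ and that there is a family $(f_i)_{i\in I}$ of elements of $A\setminus\{0\}$ such that $(A_{f_i},B_{f_i})\in\mathrm{EXT}$ for every $i\in I$ and no height-$1$ prime ideal of $B$ contains all the $f_i$. Then $(A,B)\in\mathrm{EXT}$.
   Context: For a ring $A$ and an $A$-algebra $B$, write $(A,B)\in\mathrm{EXT}$ to mean: for every derivation $\delta:A\to A$ there exists a unique derivation $D:B\to B$ such that $D\circ\varphi=\varphi\circ\delta$, where $\varphi:A\to B$ is the structure map. *)

theory Defs
  imports "HOL-Computational_Algebra.Polynomial_Factorial"
begin

text \<open>All rings below live inside one ambient commutative ring; structure maps are inclusions.\<close>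

definition is_subring :: "'a::comm_ring_1 set \<Rightarrow> bool" where
  "is_subring R \<longleftrightarrow> 0 \<in> R \<and> 1 \<in> R \<and>
     (\<forall>x\<in>R. \<forall>y\<in>R. x + y \<in> R \<and> x - y \<in> R \<and> x * y \<in> R)"

definition is_derivation :: "'a::comm_ring_1 set \<Rightarrow> ('a \<Rightarrow> 'a) \<Rightarrow> bool" where
  "is_derivation R d \<longleftrightarrow> (\<forall>x\<in>R. d x \<in> R) \<and>
     (\<forall>x\<in>R. \<forall>y\<in>R. d (x + y) = d x + d y \<and> d (x * y) = x * d y + y * d x)"

definition EXT :: "'a::comm_ring_1 set \<Rightarrow> 'a set \<Rightarrow> bool" where
  "EXT R S \<longleftrightarrow> (\<forall>\<delta>. is_derivation R \<delta> \<longrightarrow>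
     (\<exists>D. is_derivation S D \<and> (\<forall>x\<in>R. D x = \<delta> x) \<and>
        (\<forall>D'. is_derivation S D' \<and> (\<forall>x\<in>R. D' x = \<delta> x) \<longrightarrow> (\<forall>x\<in>S. D' x = D x))))"

text \<open>Fraction field of a subring A of a domain, realised inside the fraction field of the domain.\<close>
definition frac_sub :: "'a::idom set \<Rightarrow> 'a fract set" where
  "frac_sub A = {to_fract a / to_fract s | a s. a \<in> A \<and> s \<in> A \<and> s \<noteq> 0}"

text \<open>Localization A_f of a subring A at f, realised inside the fraction field.\<close>
definition loc_sub :: "'a::idom set \<Rightarrow> 'a \<Rightarrow> 'a fract set" where
  "loc_sub A f = {to_fract a / (to_fract f) ^ n | a n. a \<in> A}"

definition ring_ideal :: "'a::comm_ring_1 set \<Rightarrow> bool" where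
  "ring_ideal I \<longleftrightarrow> 0 \<in> I \<and> (\<forall>x\<in>I. \<forall>y\<in>I. x + y \<in> I) \<and> (\<forall>r. \<forall>x\<in>I. r * x \<in> I)"

definition prime_ideal :: "'a::comm_ring_1 set \<Rightarrow> bool" where
  "prime_ideal P \<longleftrightarrow> ring_ideal P \<and> P \<noteq> UNIV \<and> (\<forall>a b. a * b \<in> P \<longrightarrow> a \<in> P \<or> b \<in> P)"

definition height_one_prime :: "'a::comm_ring_1 set \<Rightarrow> bool" where
  "height_one_prime P \<longleftrightarrow> prime_ideal P \<and>
     (\<exists>Q. prime_ideal Q \<and> Q \<subset> P) \<and>
     \<not> (\<exists>Q0 Q1. prime_ideal Q0 \<and> prime_ideal Q1 \<and> Q0 \<subset> Q1 \<and> Q1 \<subset> P)"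

definition noetherian_ring :: "'a::comm_ring_1 itself \<Rightarrow> bool" where
  "noetherian_ring _ \<longleftrightarrow> (\<forall>I::'a set. ring_ideal I \<longrightarrow>
     (\<exists>F. finite F \<and> F \<subseteq> I \<and> I = {y. \<exists>r. y = (\<Sum>x\<in>F. r x * x)}))"

definition normal_domain :: "'a::idom itself \<Rightarrow> bool" where
  "normal_domain _ \<longleftrightarrow> (\<forall>x::'a fract. \<forall>p::'a poly.
     lead_coeff p = 1 \<and> poly (map_poly to_fract p) x = 0 \<longrightarrow> x \<in> range to_fract)"

end

theory Submission
  imports Defs
begin

(* Write K for the fraction field of B. A derivation of A extends uniquely, by the quotient
   rule, to Frac A and then, by hypothesis, to a derivation D of K. A derivation of B, or of
   some B_f, extending the given one of A extends in turn to K and so agrees with D there.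
   Hence the theorem amounts to D(B) <= B, and comparing D with the extension through B_f
   shows D(B) <= B_f for every f = f_i. It remains to see that the B_f intersect in B. If x in K
   is not in B, an ideal maximal among the conductors (B : yx) with yx not in B is a prime
   P = (B : x'), and P contains all the f_i. It is nonzero, and a nonzero prime strictly inside
   P would give q <> 0 with q x'^n in B for all n: x' would be almost integral, hence integral
   since B is noetherian, hence in B since B is normal. So P has height one, contradicting
   the hypothesis. *)

definition fractions :: "'k::field set \<Rightarrow> 'k set \<Rightarrow> 'k set" where
  "fractions R M = {a / s | a s. a \<in> R \<and> s \<in> M}"

definition denominator_set :: "'k::field set \<Rightarrow> 'k set \<Rightarrow> bool" where
  "denominator_set R M \<longleftrightarrow> M \<subseteq> R \<and> 0 \<notin> M \<and> 1 \<in> M \<and> (\<forall>s\<in>M. \<forall>t\<in>M. s * t \<in> M)"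

definition powers :: "'a::monoid_mult \<Rightarrow> 'a set" where
  "powers x = range (\<lambda>n. x ^ n)"

(* Independent of the representation z = a / s by quotient_rule_well_defined; the value
   outside fractions R M is unspecified. *)
definition quotient_extension :: "'k::field set \<Rightarrow> 'k set \<Rightarrow> ('k \<Rightarrow> 'k) \<Rightarrow> 'k \<Rightarrow> 'k" where
  "quotient_extension R M d z =
     (SOME v. \<exists>a s. a \<in> R \<and> s \<in> M \<and> z = a / s \<and> v = (d a - z * d s) / s)"

lemma denominator_set_nonzero: "is_subring R \<Longrightarrow> denominator_set R (R - {0})"
  unfolding denominator_set_def is_subring_def by auto

lemma denominator_set_powers:
  assumes R: "is_subring R" and g: "g \<in> R" "g \<noteq> 0"
  shows "denominator_set R (powers g)"
proof -
  have "g ^ n \<in> R" for n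
    by (induction n) (use R g in \<open>auto simp: is_subring_def\<close>)
  then show ?thesis
    using g(2) unfolding denominator_set_def powers_def
    by (auto simp: power_add[symmetric]) (metis power_0 rangeI)
qed

lemma subset_fractions: "denominator_set R M \<Longrightarrow> R \<subseteq> fractions R M"
  unfolding denominator_set_def fractions_def by force

lemma fractions_mono: "R \<subseteq> R' \<Longrightarrow> fractions R M \<subseteq> fractions R' M"
  unfolding fractions_def by blast

lemma is_subring_fractions:
  assumes R: "is_subring R" and M: "denominator_set R M"
  shows "is_subring (fractions R M)"
  unfolding is_subring_def
proof (intro conjI ballI)
  show "0 \<in> fractions R M" "1 \<in> fractions R M"
    using R subset_fractions[OF M] unfolding is_subring_def by auto
next
  fix z1 z2 assume "z1 \<in> fractions R M" "z2 \<in> fractions R M"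
  then obtain a s b t where h: "a \<in> R" "s \<in> M" "z1 = a / s" "b \<in> R" "t \<in> M" "z2 = b / t"
    unfolding fractions_def by blast
  have st: "s \<noteq> 0" "t \<noteq> 0" "s \<in> R" "t \<in> R" "s * t \<in> M"
    using M h unfolding denominator_set_def by auto
  have "a * t + b * s \<in> R" "a * t - b * s \<in> R" "a * b \<in> R"
    using R h st unfolding is_subring_def by auto
  moreover have "z1 + z2 = (a * t + b * s) / (s * t)" "z1 - z2 = (a * t - b * s) / (s * t)"
    "z1 * z2 = (a * b) / (s * t)" using h st by (simp_all add: field_simps)
  ultimately show "z1 + z2 \<in> fractions R M" "z1 - z2 \<in> fractions R M" "z1 * z2 \<in> fractions R M"
    using st(5) unfolding fractions_def by blast+
qed

lemma derivation_one: "is_derivation R d \<Longrightarrow> 1 \<in> R \<Longrightarrow> d 1 = 0"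
  unfolding is_derivation_def by (metis add_cancel_left_right mult_1)

lemma derivation_quotient_rule:
  fixes D :: "'k::field \<Rightarrow> 'k"
  assumes "is_derivation T D" "a / s \<in> T" "s \<in> T" "s \<noteq> 0"
  shows "D (a / s) = (D a - a / s * D s) / s"
proof -
  have "D (s * (a / s)) = s * D (a / s) + a / s * D s"
    using assms unfolding is_derivation_def by blast
  then show ?thesis using assms(4) by (simp add: field_simps)
qed

lemma quotient_rule_well_defined:
  fixes d :: "'k::field \<Rightarrow> 'k"
  assumes d: "is_derivation R d" and R: "a \<in> R" "b \<in> R" "s \<in> R" "t \<in> R"
    and st: "s \<noteq> 0" "t \<noteq> 0" and eq: "a / s = b / t"
  shows "(d a - a / s * d s) / s = (d b - b / t * d t) / t"
proof -
  define z where "z = a / s"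
  have ab: "a = z * s" "b = z * t"
    using st unfolding z_def by simp (simp add: eq st)
  have "d (a * t) = d (b * s)" using ab by (simp add: ac_simps)
  then have "z * s * d t + t * d a = z * t * d s + s * d b"
    using d R ab unfolding is_derivation_def by metis
  then have "t * (d a - z * d s) = s * (d b - z * d t)" by algebra
  then show ?thesis using st eq unfolding z_def[symmetric] by (simp add: field_simps)
qed

lemma quotient_extension_eq:
  fixes d :: "'k::field \<Rightarrow> 'k"
  assumes d: "is_derivation R d" and M: "denominator_set R M"
    and a: "a \<in> R" "s \<in> M" "z = a / s"
  shows "quotient_extension R M d z = (d a - z * d s) / s"
proof -
  have "\<exists>a s. a \<in> R \<and> s \<in> M \<and> z = a / s \<and>
      quotient_extension R M d z = (d a - z * d s) / s"
    unfolding quotient_extension_def by (rule someI_ex) (use a in blast)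
  then obtain a' s' where a': "a' \<in> R" "s' \<in> M" "z = a' / s'"
    and val: "quotient_extension R M d z = (d a' - z * d s') / s'" by blast
  have "s \<in> R" "s' \<in> R" "s \<noteq> 0" "s' \<noteq> 0"
    using a(2) a'(2) M unfolding denominator_set_def by auto
  from quotient_rule_well_defined[OF d a'(1) a(1) this(2,1,4,3)]
  show ?thesis using a(3) a'(3) val by simp
qed

lemma quotient_extension_restrict:
  fixes d :: "'k::field \<Rightarrow> 'k"
  assumes d: "is_derivation R d" and M: "denominator_set R M" and a: "a \<in> R"
  shows "quotient_extension R M d a = d a"
proof -
  have "1 \<in> M" "1 \<in> R" using M unfolding denominator_set_def by auto
  then show ?thesis
    using quotient_extension_eq[OF d M a, of 1] derivation_one[OF d] by simp
qed

lemma quotient_extension_mem_fractions: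
  fixes d :: "'k::field \<Rightarrow> 'k"
  assumes R: "is_subring R" and d: "is_derivation R d" and M: "denominator_set R M"
    and z: "z \<in> fractions R M"
  shows "quotient_extension R M d z \<in> fractions R M"
proof -
  obtain a s where h: "a \<in> R" "s \<in> M" "z = a / s" using z unfolding fractions_def by blast
  have s: "s \<in> R" "s \<noteq> 0" "s * s \<in> M" using M h(2) unfolding denominator_set_def by auto
  have "quotient_extension R M d z = (d a * s - a * d s) / (s * s)"
    using quotient_extension_eq[OF d M h] s by (simp add: h(3) field_simps)
  moreover have "d a \<in> R" "d s \<in> R" using d h(1) s(1) unfolding is_derivation_def by auto
  then have "d a * s - a * d s \<in> R" using R h(1) s(1) unfolding is_subring_def by auto
  ultimately show ?thesis using s(3) unfolding fractions_def by blast
qed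

lemma is_derivation_quotient_extension:
  fixes d :: "'k::field \<Rightarrow> 'k"
  assumes R: "is_subring R" and d: "is_derivation R d" and M: "denominator_set R M"
  shows "is_derivation (fractions R M) (quotient_extension R M d)"
proof -
  note qe = quotient_extension_eq[OF d M]
  have R_ops: "x + y \<in> R" "x * y \<in> R" if "x \<in> R" "y \<in> R" for x y
    using R that unfolding is_subring_def by auto
  have d_ops: "d (x + y) = d x + d y" "d (x * y) = x * d y + y * d x"
    if "x \<in> R" "y \<in> R" for x y
    using d that unfolding is_derivation_def by auto
  show ?thesis
    unfolding is_derivation_def
  proof (intro conjI ballI)
    fix z assume "z \<in> fractions R M"
    then show "quotient_extension R M d z \<in> fractions R M"
      by (rule quotient_extension_mem_fractions[OF R d M])
  next
    fix z1 z2 assume "z1 \<in> fractions R M" "z2 \<in> fractions R M"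
    then obtain a s b t where h: "a \<in> R" "s \<in> M" "z1 = a / s" "b \<in> R" "t \<in> M" "z2 = b / t"
      unfolding fractions_def by blast
    have st: "s \<in> R" "t \<in> R" "s \<noteq> 0" "t \<noteq> 0" "s * t \<in> M"
      using M h(2,5) unfolding denominator_set_def by auto
    have e1: "quotient_extension R M d z1 = (d a - z1 * d s) / s"
      and e2: "quotient_extension R M d z2 = (d b - z2 * d t) / t"
      by (rule qe[OF h(1-3)], rule qe[OF h(4-6)])
    have dst: "d (s * t) = s * d t + t * d s" using d_ops st by blast
    have sum: "z1 + z2 = (a * t + b * s) / (s * t)" using h st by (simp add: field_simps)
    have "quotient_extension R M d (z1 + z2) =
        (d (a * t + b * s) - (z1 + z2) * d (s * t)) / (s * t)"
      using h st R_ops by (intro qe[OF _ st(5) sum]) auto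
    also have "\<dots> = quotient_extension R M d z1 + quotient_extension R M d z2"
      unfolding e1 e2 dst using d_ops h st R_ops by (simp add: h(3,6) field_simps)
    finally show "quotient_extension R M d (z1 + z2) =
        quotient_extension R M d z1 + quotient_extension R M d z2" .
    have "quotient_extension R M d (z1 * z2) = (d (a * b) - (z1 * z2) * d (s * t)) / (s * t)"
      using h st R_ops by (intro qe[OF _ st(5)]) auto
    also have "\<dots> = z1 * quotient_extension R M d z2 + z2 * quotient_extension R M d z1"
      unfolding e1 e2 dst using d_ops(2) h st by (simp add: h(3,6) field_simps)
    finally show "quotient_extension R M d (z1 * z2) =
        z1 * quotient_extension R M d z2 + z2 * quotient_extension R M d z1" .
  qed
qed

lemma derivation_eq_quotient_extension:
  fixes E :: "'k::field \<Rightarrow> 'k"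
  assumes d: "is_derivation R d" and M: "denominator_set R M"
    and E: "is_derivation T E" "fractions R M \<subseteq> T" "\<forall>a\<in>R. E a = d a"
    and z: "z \<in> fractions R M"
  shows "E z = quotient_extension R M d z"
proof -
  obtain a s where h: "a \<in> R" "s \<in> M" "z = a / s" using z unfolding fractions_def by blast
  have s: "s \<in> R" "s \<noteq> 0" using h(2) M unfolding denominator_set_def by auto
  have "s \<in> T" using s(1) subset_fractions[OF M] E(2) by blast
  then have "E z = (E a - z * E s) / s"
    using derivation_quotient_rule[OF E(1), of a s] z E(2) s(2) h(3) by blast
  also have "\<dots> = (d a - z * d s) / s" using E(3) h(1) s(1) by simp
  also have "\<dots> = quotient_extension R M d z" using quotient_extension_eq[OF d M h] by simp
  finally show ?thesis .
qed

lemma EXT_unique: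
  assumes "EXT R T" "is_derivation R \<delta>"
    and "is_derivation T D\<^sub>1" "\<forall>a\<in>R. D\<^sub>1 a = \<delta> a"
    and "is_derivation T D\<^sub>2" "\<forall>a\<in>R. D\<^sub>2 a = \<delta> a"
    and "x \<in> T"
  shows "D\<^sub>1 x = D\<^sub>2 x"
  using assms unfolding EXT_def by metis

lemma EXT_of_EXT_fractions:
  fixes R T :: "'k::field set"
  assumes R: "is_subring R" and M: "denominator_set R M"
    and sub: "fractions R M \<subseteq> T" and ext: "EXT (fractions R M) T"
  shows "EXT R T"
  unfolding EXT_def
proof (intro allI impI)
  fix \<delta> assume \<delta>: "is_derivation R \<delta>"
  let ?\<delta>' = "quotient_extension R M \<delta>"
  have \<delta>': "is_derivation (fractions R M) ?\<delta>'"
    by (rule is_derivation_quotient_extension[OF R \<delta> M])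
  obtain D where D: "is_derivation T D" "\<forall>z\<in>fractions R M. D z = ?\<delta>' z"
    and uniq: "\<And>D'. is_derivation T D' \<Longrightarrow> \<forall>z\<in>fractions R M. D' z = ?\<delta>' z \<Longrightarrow> \<forall>x\<in>T. D' x = D x"
    using ext \<delta>' unfolding EXT_def by metis
  show "\<exists>D. is_derivation T D \<and> (\<forall>a\<in>R. D a = \<delta> a) \<and>
      (\<forall>D'. is_derivation T D' \<and> (\<forall>a\<in>R. D' a = \<delta> a) \<longrightarrow> (\<forall>x\<in>T. D' x = D x))"
  proof (intro exI conjI allI impI)
    show "is_derivation T D" by (rule D(1))
    show "\<forall>a\<in>R. D a = \<delta> a"
      using D(2) subset_fractions[OF M] quotient_extension_restrict[OF \<delta> M] by auto
  next
    fix D' assume "is_derivation T D' \<and> (\<forall>a\<in>R. D' a = \<delta> a)"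
    then show "\<forall>x\<in>T. D' x = D x"
      using uniq derivation_eq_quotient_extension[OF \<delta> M _ sub] by blast
  qed
qed

lemma derivation_extends_to_fraction_field:
  fixes T :: "'k::field set"
  assumes T: "is_subring T" and K: "fractions T (T - {0}) = UNIV" and d: "is_derivation T d"
  obtains E where "is_derivation UNIV E" "\<forall>x\<in>T. E x = d x"
  using is_derivation_quotient_extension[OF T d denominator_set_nonzero[OF T]]
    quotient_extension_restrict[OF d denominator_set_nonzero[OF T]] K
  by (metis (no_types, lifting))

lemma EXT_UNIV_preserves_subring:
  fixes R T :: "'k::field set"
  assumes ext_T: "EXT R T" and ext_K: "EXT R UNIV"
    and T: "is_subring T" "R \<subseteq> T" "fractions T (T - {0}) = UNIV"
    and \<delta>: "is_derivation R \<delta>" and D: "is_derivation UNIV D" "\<forall>a\<in>R. D a = \<delta> a"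
    and x: "x \<in> T"
  shows "D x \<in> T"
proof -
  obtain D\<^sub>T where D\<^sub>T: "is_derivation T D\<^sub>T" "\<forall>a\<in>R. D\<^sub>T a = \<delta> a"
    using ext_T \<delta> unfolding EXT_def by blast
  obtain E where E: "is_derivation UNIV E" "\<forall>y\<in>T. E y = D\<^sub>T y"
    using derivation_extends_to_fraction_field[OF T(1,3) D\<^sub>T(1)] by blast
  have "\<forall>a\<in>R. E a = \<delta> a" using E(2) D\<^sub>T(2) T(2) by auto
  then have "D x = E x" using EXT_unique[OF ext_K \<delta> D E(1)] by blast
  then show ?thesis
    using E(2) D\<^sub>T(1) x unfolding is_derivation_def by auto
qed

lemma EXT_if_UNIV_preserves_subring:
  fixes R T :: "'k::field set"
  assumes ext_K: "EXT R UNIV" and T: "is_subring T" "R \<subseteq> T" "fractions T (T - {0}) = UNIV"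
    and preserves: "\<And>\<delta> D x. is_derivation R \<delta> \<Longrightarrow> is_derivation UNIV D \<Longrightarrow>
      \<forall>a\<in>R. D a = \<delta> a \<Longrightarrow> x \<in> T \<Longrightarrow> D x \<in> T"
  shows "EXT R T"
  unfolding EXT_def
proof (intro allI impI)
  fix \<delta> assume \<delta>: "is_derivation R \<delta>"
  obtain D where D: "is_derivation UNIV D" "\<forall>a\<in>R. D a = \<delta> a"
    using ext_K \<delta> unfolding EXT_def by blast
  show "\<exists>D. is_derivation T D \<and> (\<forall>a\<in>R. D a = \<delta> a) \<and>
      (\<forall>D'. is_derivation T D' \<and> (\<forall>a\<in>R. D' a = \<delta> a) \<longrightarrow> (\<forall>x\<in>T. D' x = D x))"
  proof (intro exI conjI allI impI)
    show "is_derivation T D"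
      using D preserves[OF \<delta> D] unfolding is_derivation_def by blast
    show "\<forall>a\<in>R. D a = \<delta> a" by (rule D(2))
  next
    fix D' assume D': "is_derivation T D' \<and> (\<forall>a\<in>R. D' a = \<delta> a)"
    then obtain E where E: "is_derivation UNIV E" "\<forall>x\<in>T. E x = D' x"
      using derivation_extends_to_fraction_field[OF T(1,3)] by blast
    have "\<forall>a\<in>R. E a = \<delta> a" using E(2) D' T(2) by auto
    then have "E x = D x" for x using EXT_unique[OF ext_K \<delta> E(1) _ D] by blast
    then show "\<forall>x\<in>T. D' x = D x" using E(2) by simp
  qed
qed

lemma ring_idealD:
  assumes "ring_ideal I"
  shows "0 \<in> I" and "x \<in> I \<Longrightarrow> y \<in> I \<Longrightarrow> x + y \<in> I" and "x \<in> I \<Longrightarrow> r * x \<in> I"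
  using assms unfolding ring_ideal_def by blast+

lemma ring_ideal_sum_mem:
  assumes I: "ring_ideal I" and F: "finite F" "F \<subseteq> I"
  shows "(\<Sum>g\<in>F. r g * g) \<in> I"
  using F by (induction F rule: finite_induct) (auto intro: ring_idealD[OF I])

lemma ring_ideal_Union_chain:
  fixes C :: "nat \<Rightarrow> 'a::comm_ring_1 set"
  assumes C: "\<And>n. ring_ideal (C n)" and mono: "mono C"
  shows "ring_ideal (\<Union>n. C n)"
  unfolding ring_ideal_def
proof (intro conjI ballI allI)
  show "0 \<in> (\<Union>n. C n)" using ring_idealD(1)[OF C] by blast
next
  fix x y assume "x \<in> (\<Union>n. C n)" "y \<in> (\<Union>n. C n)"
  then obtain m n where "x \<in> C m" "y \<in> C n" by blast
  then have "x \<in> C (max m n)" "y \<in> C (max m n)"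
    using monoD[OF mono, of m "max m n"] monoD[OF mono, of n "max m n"] by auto
  then show "x + y \<in> (\<Union>n. C n)" using ring_idealD(2)[OF C] by blast
next
  fix r x assume "x \<in> (\<Union>n. C n)"
  then show "r * x \<in> (\<Union>n. C n)" using ring_idealD(3)[OF C] by blast
qed

lemma noetherian_ascending_chain:
  fixes C :: "nat \<Rightarrow> 'a::comm_ring_1 set"
  assumes noeth: "noetherian_ring TYPE('a)" and C: "\<And>n. ring_ideal (C n)" and mono: "mono C"
  shows "\<exists>N. C (Suc N) \<subseteq> C N"
proof -
  obtain F where F: "finite F" "F \<subseteq> (\<Union>n. C n)" "(\<Union>n. C n) = {y. \<exists>r. y = (\<Sum>x\<in>F. r x * x)}"
    using noeth[unfolded noetherian_ring_def, rule_format, OF ring_ideal_Union_chain[OF C mono]]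
    by blast
  have "C m \<subseteq> C n \<or> C n \<subseteq> C m" for m n
    using nat_le_linear[of m n] monoD[OF mono] by blast
  then have "subset.chain UNIV (range C)" unfolding subset.chain_def by blast
  then obtain N where N: "F \<subseteq> C N"
    using finite_subset_Union_chain[OF F(1,2)] by blast
  have "C (Suc N) \<subseteq> C N"
  proof
    fix y assume "y \<in> C (Suc N)"
    then obtain r where "y = (\<Sum>x\<in>F. r x * x)" using F(3) by blast
    then show "y \<in> C N" using ring_ideal_sum_mem[OF C F(1) N] by simp
  qed
  then show ?thesis ..
qed

lemma noetherian_maximal_element:
  fixes \<F> :: "'a::comm_ring_1 set set"
  assumes noeth: "noetherian_ring TYPE('a)" and "\<F> \<noteq> {}" and ideals: "\<forall>I\<in>\<F>. ring_ideal I"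
  obtains P where "P \<in> \<F>" "\<forall>J\<in>\<F>. \<not> P \<subset> J"
proof (rule ccontr)
  assume "\<not> thesis"
  then have "\<forall>P\<in>\<F>. \<exists>J\<in>\<F>. P \<subset> J" using that by blast
  then obtain next_ideal where next_ideal: "\<And>P. P \<in> \<F> \<Longrightarrow> next_ideal P \<in> \<F> \<and> P \<subset> next_ideal P"
    by metis
  obtain I\<^sub>0 where "I\<^sub>0 \<in> \<F>" using assms(2) by blast
  define C where "C n = (next_ideal ^^ n) I\<^sub>0" for n
  have C: "C n \<in> \<F>" for n
    unfolding C_def by (induction n) (use \<open>I\<^sub>0 \<in> \<F>\<close> next_ideal in auto)
  have strict: "C n \<subset> C (Suc n)" for n
    using next_ideal[OF C[of n]] unfolding C_def by simp
  then have "mono C" by (simp add: mono_iff_le_Suc psubset_imp_subset)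
  then obtain N where "C (Suc N) \<subseteq> C N"
    using noetherian_ascending_chain[OF noeth] C ideals by blast
  then show False using strict[of N] by blast
qed

lemma prime_ideal_power_mem:
  assumes P: "prime_ideal P" and "a ^ n \<in> P"
  shows "a \<in> P"
  using assms(2)
proof (induction n)
  case 0
  then have "r \<in> P" for r using ring_idealD(3)[of P 1 r] P unfolding prime_ideal_def by simp
  then show ?case using P unfolding prime_ideal_def by blast
next
  case (Suc n)
  then show ?case using P unfolding prime_ideal_def by (metis power_Suc)
qed

lemma prime_ideal_zero: "prime_ideal ({0} :: 'a::idom set)"
  unfolding prime_ideal_def ring_ideal_def by (auto simp: set_eq_iff intro: exI[of _ 1])

lemma normal_domain_monic_root:
  fixes x :: "'b::idom fract"
  assumes norm: "normal_domain TYPE('b)"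
    and root: "x ^ N = (\<Sum>k<N. to_fract (r k) * x ^ k)"
  shows "x \<in> range to_fract"
proof -
  define p where "p = monom (1::'b) N - (\<Sum>k<N. monom (r k) k)"
  have coeff_p: "coeff p i = (if i = N then 1 else 0) - (\<Sum>k<N. if k = i then r k else 0)" for i
    unfolding p_def by (simp add: coeff_sum coeff_monom)
  have "degree p = N"
    using le_degree[of p N] degree_le[of N p] coeff_p by force
  then have "lead_coeff p = 1" using coeff_p[of N] by simp
  moreover have "map_poly to_fract p = monom 1 N - (\<Sum>k<N. monom (to_fract (r k)) k)"
    by (rule poly_eqI) (simp add: coeff_map_poly coeff_p coeff_sum coeff_monom)
  then have "poly (map_poly to_fract p) x = 0" by (simp add: poly_sum poly_monom root)
  ultimately show ?thesis using norm unfolding normal_domain_def by blast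
qed

definition ideal_span_upto :: "(nat \<Rightarrow> 'a::comm_ring_1) \<Rightarrow> nat \<Rightarrow> 'a set" where
  "ideal_span_upto c N = {y. \<exists>r. y = (\<Sum>k<N. r k * c k)}"

lemma ring_ideal_ideal_span_upto: "ring_ideal (ideal_span_upto c N)"
  unfolding ring_ideal_def
proof (intro conjI ballI allI)
  show "0 \<in> ideal_span_upto c N"
    unfolding ideal_span_upto_def by (auto intro!: exI[of _ "\<lambda>_. 0"])
next
  fix y z assume "y \<in> ideal_span_upto c N" "z \<in> ideal_span_upto c N"
  then obtain r1 r2 where "y = (\<Sum>k<N. r1 k * c k)" "z = (\<Sum>k<N. r2 k * c k)"
    unfolding ideal_span_upto_def by blast
  then have "y + z = (\<Sum>k<N. (r1 k + r2 k) * c k)" by (simp add: sum.distrib algebra_simps)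
  then show "y + z \<in> ideal_span_upto c N" unfolding ideal_span_upto_def by (intro CollectI exI)
next
  fix s y assume "y \<in> ideal_span_upto c N"
  then obtain r where "y = (\<Sum>k<N. r k * c k)" unfolding ideal_span_upto_def by blast
  then have "s * y = (\<Sum>k<N. (s * r k) * c k)" by (simp add: sum_distrib_left algebra_simps)
  then show "s * y \<in> ideal_span_upto c N" unfolding ideal_span_upto_def by (intro CollectI exI)
qed

lemma mono_ideal_span_upto: "mono (ideal_span_upto c)"
proof (rule monoI, rule subsetI)
  fix N M y assume "N \<le> M" "y \<in> ideal_span_upto c N"
  then obtain r where "y = (\<Sum>k<N. r k * c k)" unfolding ideal_span_upto_def by blast
  also have "\<dots> = (\<Sum>k<M. (if k < N then r k else 0) * c k)"
    using \<open>N \<le> M\<close> by (intro sum.mono_neutral_cong_left) auto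
  finally show "y \<in> ideal_span_upto c M" unfolding ideal_span_upto_def by (intro CollectI exI)
qed

lemma almost_integral_mem_range_to_fract:
  fixes x :: "'b::idom fract"
  assumes noeth: "noetherian_ring TYPE('b)" and norm: "normal_domain TYPE('b)"
    and q: "q \<noteq> 0" and bounded: "\<And>n. to_fract q * x ^ n \<in> range to_fract"
  shows "x \<in> range to_fract"
proof -
  have "\<forall>n. \<exists>w. to_fract w = to_fract q * x ^ n" using bounded by (metis rangeE)
  then obtain c where c: "\<And>n. to_fract (c n) = to_fract q * x ^ n" by metis
  obtain N where "ideal_span_upto c (Suc N) \<subseteq> ideal_span_upto c N"
    using noetherian_ascending_chain[OF noeth ring_ideal_ideal_span_upto mono_ideal_span_upto]
    by blast
  moreover have "c N \<in> ideal_span_upto c (Suc N)"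
    unfolding ideal_span_upto_def by (auto intro!: exI[of _ "\<lambda>k. if k = N then 1 else 0"])
  ultimately obtain r where "c N = (\<Sum>k<N. r k * c k)" unfolding ideal_span_upto_def by blast
  then have "to_fract (c N) = (\<Sum>k<N. to_fract (r k) * to_fract (c k))" by simp
  then have "to_fract q * x ^ N = to_fract q * (\<Sum>k<N. to_fract (r k) * x ^ k)"
    by (simp add: c sum_distrib_left algebra_simps)
  then show ?thesis
    using normal_domain_monic_root[OF norm] q by simp
qed

definition conductor :: "'b::idom fract \<Rightarrow> 'b set" where
  "conductor x = {y. to_fract y * x \<in> range to_fract}"

lemma one_mem_conductor_iff: "1 \<in> conductor x \<longleftrightarrow> x \<in> range to_fract"
  unfolding conductor_def by simp

lemma mem_conductor_mult_iff: "y \<in> conductor (to_fract a * x) \<longleftrightarrow> a * y \<in> conductor x"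
  unfolding conductor_def by (simp add: ac_simps)

lemma ring_ideal_conductor: "ring_ideal (conductor x)"
  unfolding ring_ideal_def
proof (intro conjI ballI allI)
  show "0 \<in> conductor x" unfolding conductor_def using rangeI[of to_fract 0] by simp
next
  fix a b assume "a \<in> conductor x" "b \<in> conductor x"
  then obtain u v where "to_fract a * x = to_fract u" "to_fract b * x = to_fract v"
    unfolding conductor_def by auto
  then have "to_fract (a + b) * x = to_fract (u + v)" by (simp add: algebra_simps)
  then show "a + b \<in> conductor x" unfolding conductor_def by (metis mem_Collect_eq rangeI)
next
  fix r a assume "a \<in> conductor x"
  then obtain u where "to_fract a * x = to_fract u" unfolding conductor_def by auto
  then have "to_fract (r * a) * x = to_fract (r * u)" by (simp add: algebra_simps)
  then show "r * a \<in> conductor x" unfolding conductor_def by (metis mem_Collect_eq rangeI)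
qed

lemma conductor_subset_mult: "conductor x \<subseteq> conductor (to_fract a * x)"
  using ring_idealD(3)[OF ring_ideal_conductor] by (auto simp: mem_conductor_mult_iff)

lemma conductor_nonzero:
  obtains d where "d \<noteq> 0" "d \<in> conductor x"
proof (cases x)
  case (Fract c d)
  then have "to_fract d * x = to_fract c" by (simp add: Fract_conv_to_fract)
  then show thesis using that Fract unfolding conductor_def by (metis mem_Collect_eq rangeI)
qed

lemma exists_prime_conductor:
  fixes x :: "'b::idom fract"
  assumes noeth: "noetherian_ring TYPE('b)" and x: "x \<notin> range to_fract"
  obtains a where "to_fract a * x \<notin> range to_fract" "prime_ideal (conductor (to_fract a * x))"
proof -
  define \<F> where "\<F> = {conductor (to_fract a * x) | a. to_fract a * x \<notin> range to_fract}"
  have "to_fract 1 * x \<notin> range to_fract" using x by simp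
  then have "conductor (to_fract 1 * x) \<in> \<F>" unfolding \<F>_def by blast
  moreover have "\<forall>J\<in>\<F>. ring_ideal J" unfolding \<F>_def using ring_ideal_conductor by blast
  ultimately obtain P where "P \<in> \<F>" and P_max: "\<forall>J\<in>\<F>. \<not> P \<subset> J"
    using noetherian_maximal_element[OF noeth] by blast
  then obtain a where a: "to_fract a * x \<notin> range to_fract" and P: "P = conductor (to_fract a * x)"
    unfolding \<F>_def by blast
  have "prime_ideal P"
    unfolding prime_ideal_def
  proof (intro conjI allI impI)
    show "ring_ideal P" using P ring_ideal_conductor by simp
    show "P \<noteq> UNIV" using a P one_mem_conductor_iff by blast
  next
    fix b c assume bc: "b * c \<in> P"
    show "b \<in> P \<or> c \<in> P"
    proof (cases "b \<in> P")
      case False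
      have shift: "to_fract (b * a) * x = to_fract b * (to_fract a * x)" by (simp add: ac_simps)
      have "to_fract (b * a) * x \<notin> range to_fract"
        using False unfolding P shift conductor_def by simp
      then have "conductor (to_fract (b * a) * x) \<in> \<F>" unfolding \<F>_def by blast
      moreover have "P \<subseteq> conductor (to_fract (b * a) * x)"
        unfolding P shift by (rule conductor_subset_mult)
      ultimately have "P = conductor (to_fract (b * a) * x)" using P_max by blast
      moreover have "c \<in> conductor (to_fract b * (to_fract a * x))"
        using bc unfolding P mem_conductor_mult_iff .
      ultimately have "c \<in> P" unfolding shift by simp
      then show ?thesis ..
    qed simp
  qed
  then show thesis using that a P by blast
qed

lemma mult_power_mem_if_stable:
  fixes x :: "'b::idom fract"
  assumes q: "q \<in> J" and stable: "\<forall>w\<in>J. to_fract w * x \<in> to_fract ` J"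
  shows "to_fract q * x ^ n \<in> to_fract ` J"
proof (induction n)
  case 0
  show ?case using q by simp
next
  case (Suc n)
  then obtain w where "w \<in> J" "to_fract q * x ^ n = to_fract w" by blast
  then have "to_fract q * x ^ Suc n = to_fract w * x" by (metis mult.assoc power_Suc2)
  then show ?case using stable \<open>w \<in> J\<close> by (simp only:)
qed

(* For r in conductor x we have u r = p (r x) with r x in B, so p in Q would force
   conductor x <= Q. *)
lemma prime_below_conductor_stable:
  fixes x :: "'b::idom fract"
  assumes Q: "prime_ideal Q" "Q \<subset> conductor x"
    and p: "p \<in> conductor x" "to_fract p * x = to_fract u" "u \<notin> conductor x"
  shows "\<forall>w\<in>Q. to_fract w * x \<in> to_fract ` Q"
proof -
  have Q_ideal: "ring_ideal Q" and Q_prime: "\<And>a b. a * b \<in> Q \<Longrightarrow> a \<in> Q \<or> b \<in> Q"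
    using Q(1) unfolding prime_ideal_def by blast+
  have cross: "u * r = p * w" if "to_fract r * x = to_fract w" for r w
  proof -
    have "to_fract (u * r) = to_fract (p * w)"
      by (simp flip: p(2) that add: ac_simps)
    then show ?thesis by (simp only: to_fract_eq_iff)
  qed
  have "p \<notin> Q"
  proof
    assume "p \<in> Q"
    have "conductor x \<subseteq> Q"
    proof
      fix r assume "r \<in> conductor x"
      then obtain w where "to_fract r * x = to_fract w" unfolding conductor_def by auto
      then have "u * r \<in> Q"
        using cross ring_idealD(3)[OF Q_ideal \<open>p \<in> Q\<close>, of w] by (simp add: ac_simps)
      then show "r \<in> Q" using Q_prime Q(2) p(3) by blast
    qed
    then show False using Q(2) by blast
  qed
  show ?thesis
  proof
    fix w assume "w \<in> Q"
    then obtain w' where w': "to_fract w * x = to_fract w'"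
      using Q(2) unfolding conductor_def by auto
    have "p * w' \<in> Q"
      using cross[OF w'] ring_idealD(3)[OF Q_ideal \<open>w \<in> Q\<close>, of u] by (simp add: ac_simps)
    then have "w' \<in> Q" using Q_prime \<open>p \<notin> Q\<close> by blast
    then show "to_fract w * x \<in> to_fract ` Q" using w' by simp
  qed
qed

lemma no_nonzero_prime_below_conductor:
  fixes x :: "'b::idom fract"
  assumes noeth: "noetherian_ring TYPE('b)" and norm: "normal_domain TYPE('b)"
    and x: "x \<notin> range to_fract"
    and Q: "prime_ideal Q" "Q \<subset> conductor x" and q: "q \<in> Q" "q \<noteq> 0"
  shows False
proof -
  have "\<exists>J. q \<in> J \<and> (\<forall>w\<in>J. to_fract w * x \<in> to_fract ` J)"
  proof (cases "\<forall>w\<in>conductor x. to_fract w * x \<in> to_fract ` conductor x")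
    case True
    then show ?thesis using q(1) Q(2) by blast
  next
    case False
    then obtain p where p: "p \<in> conductor x" "to_fract p * x \<notin> to_fract ` conductor x" by blast
    then obtain u where u: "to_fract p * x = to_fract u" unfolding conductor_def by auto
    then have "u \<notin> conductor x" using p(2) by auto
    then show ?thesis using prime_below_conductor_stable[OF Q p(1) u] q(1) by blast
  qed
  then have "to_fract q * x ^ n \<in> range to_fract" for n using mult_power_mem_if_stable by blast
  then have "x \<in> range to_fract"
    using almost_integral_mem_range_to_fract[OF noeth norm q(2)] by blast
  with x show False ..
qed

lemma height_one_prime_conductor:
  fixes x :: "'b::idom fract"
  assumes noeth: "noetherian_ring TYPE('b)" and norm: "normal_domain TYPE('b)"
    and P: "prime_ideal (conductor x)" and x: "x \<notin> range to_fract"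
  shows "height_one_prime (conductor x)"
  unfolding height_one_prime_def
proof (intro conjI)
  show "prime_ideal (conductor x)" by (rule P)
  obtain d where "d \<noteq> 0" "d \<in> conductor x" by (rule conductor_nonzero)
  then show "\<exists>Q. prime_ideal Q \<and> Q \<subset> conductor x"
    using prime_ideal_zero ring_idealD(1)[OF ring_ideal_conductor] by blast
  show "\<not> (\<exists>Q\<^sub>0 Q\<^sub>1. prime_ideal Q\<^sub>0 \<and> prime_ideal Q\<^sub>1 \<and> Q\<^sub>0 \<subset> Q\<^sub>1 \<and> Q\<^sub>1 \<subset> conductor x)"
  proof
    assume "\<exists>Q\<^sub>0 Q\<^sub>1. prime_ideal Q\<^sub>0 \<and> prime_ideal Q\<^sub>1 \<and> Q\<^sub>0 \<subset> Q\<^sub>1 \<and> Q\<^sub>1 \<subset> conductor x"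
    then obtain Q\<^sub>0 Q\<^sub>1 where Q: "prime_ideal Q\<^sub>0" "prime_ideal Q\<^sub>1" "Q\<^sub>0 \<subset> Q\<^sub>1" "Q\<^sub>1 \<subset> conductor x"
      by blast
    then obtain q where "q \<in> Q\<^sub>1" "q \<notin> Q\<^sub>0" by blast
    moreover have "0 \<in> Q\<^sub>0" using Q(1) ring_idealD(1) unfolding prime_ideal_def by blast
    ultimately show False
      using no_nonzero_prime_below_conductor[OF noeth norm x Q(2,4)] by metis
  qed
qed

lemma mem_range_to_fract_if_no_height_one_prime:
  fixes x :: "'b::idom fract" and f :: "'i \<Rightarrow> 'b"
  assumes noeth: "noetherian_ring TYPE('b)" and norm: "normal_domain TYPE('b)"
    and height_one: "\<forall>P::'b set. height_one_prime P \<longrightarrow> \<not> (\<forall>i\<in>I. f i \<in> P)"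
    and powers: "\<forall>i\<in>I. \<exists>n. f i ^ n \<in> conductor x"
  shows "x \<in> range to_fract"
proof (rule ccontr)
  assume "x \<notin> range to_fract"
  then obtain a where x': "to_fract a * x \<notin> range to_fract"
    and P: "prime_ideal (conductor (to_fract a * x))"
    using exists_prime_conductor[OF noeth] by blast
  have "\<forall>i\<in>I. f i \<in> conductor (to_fract a * x)"
    using powers conductor_subset_mult prime_ideal_power_mem[OF P] by blast
  moreover have "height_one_prime (conductor (to_fract a * x))"
    by (rule height_one_prime_conductor[OF noeth norm P x'])
  ultimately show False using height_one by blast
qed

lemma to_fract_power: "to_fract (x ^ n) = to_fract x ^ n"
  by (induction n) simp_all

lemma is_subring_image_to_fract:
  assumes A: "is_subring (A :: 'b::idom set)"
  shows "is_subring (to_fract ` A)"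
  unfolding is_subring_def
proof (intro conjI ballI)
  show "0 \<in> to_fract ` A" "1 \<in> to_fract ` A"
    using A unfolding is_subring_def by (metis image_eqI to_fract_0, metis image_eqI to_fract_1)
next
  fix x y assume "x \<in> to_fract ` A" "y \<in> to_fract ` A"
  then obtain a b where ab: "a \<in> A" "b \<in> A" "x = to_fract a" "y = to_fract b" by blast
  then have "a + b \<in> A" "a - b \<in> A" "a * b \<in> A" using A unfolding is_subring_def by auto
  then show "x + y \<in> to_fract ` A" "x - y \<in> to_fract ` A" "x * y \<in> to_fract ` A"
    using ab by (metis image_eqI to_fract_add, metis image_eqI to_fract_diff,
        metis image_eqI to_fract_mult)
qed

lemma frac_sub_eq_fractions: "frac_sub A = fractions (to_fract ` A) (to_fract ` A - {0})"
  unfolding frac_sub_def fractions_def by (fastforce simp: image_iff)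

lemma loc_sub_eq_fractions: "loc_sub X g = fractions (to_fract ` X) (powers (to_fract g))"
  unfolding loc_sub_def fractions_def powers_def by auto

lemma fractions_over_range_to_fract:
  fixes T :: "'b::idom fract set"
  assumes "range to_fract \<subseteq> T"
  shows "fractions T (T - {0}) = UNIV"
proof -
  have "z \<in> fractions T (T - {0})" for z :: "'b fract"
  proof (cases z)
    case (Fract c d)
    then have "z = to_fract c / to_fract d" "to_fract d \<noteq> 0" by (simp_all add: Fract_conv_to_fract)
    then show ?thesis using assms unfolding fractions_def by blast
  qed
  then show ?thesis by blast
qed

lemma power_mem_conductor_if_mem_loc_sub:
  assumes "g \<noteq> 0" "z \<in> loc_sub UNIV g"
  shows "\<exists>n. g ^ n \<in> conductor z"
proof -
  obtain c n where "z = to_fract c / to_fract g ^ n" using assms(2) unfolding loc_sub_def by blast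
  then have "to_fract (g ^ n) * z = to_fract c" using assms(1) by (simp add: to_fract_power)
  then show ?thesis unfolding conductor_def by (metis mem_Collect_eq rangeI)
qed

lemma is_subring_range_to_fract: "is_subring (range to_fract)"
  using is_subring_image_to_fract[of UNIV] by (simp add: is_subring_def)

lemma range_to_fract_subset_loc_sub: "range to_fract \<subseteq> loc_sub UNIV g"
proof -
  have "to_fract a = to_fract a / to_fract g ^ 0" for a by simp
  then show ?thesis unfolding loc_sub_def by blast
qed

lemma is_subring_loc_sub_UNIV:
  assumes "g \<noteq> 0"
  shows "is_subring (loc_sub UNIV g)"
  unfolding loc_sub_eq_fractions using assms
  by (simp add: is_subring_fractions is_subring_range_to_fract denominator_set_powers)

lemma EXT_image_to_fract_if_EXT_frac_sub:
  assumes "is_subring A" "EXT (frac_sub A) UNIV"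
  shows "EXT (to_fract ` A) UNIV"
proof -
  have "is_subring (to_fract ` A)" by (rule is_subring_image_to_fract[OF assms(1)])
  from EXT_of_EXT_fractions[OF this denominator_set_nonzero[OF this]] assms(2)
  show ?thesis by (simp add: frac_sub_eq_fractions)
qed

lemma EXT_image_to_fract_if_EXT_loc_sub:
  assumes A: "is_subring A" and g: "g \<in> A" "g \<noteq> 0"
    and ext: "EXT (loc_sub A g) (loc_sub UNIV g)"
  shows "EXT (to_fract ` A) (loc_sub UNIV g)"
proof (rule EXT_of_EXT_fractions)
  show "is_subring (to_fract ` A)" by (rule is_subring_image_to_fract[OF A])
  show "denominator_set (to_fract ` A) (powers (to_fract g))"
    using g by (intro denominator_set_powers[OF is_subring_image_to_fract[OF A]]) auto
  show "fractions (to_fract ` A) (powers (to_fract g)) \<subseteq> loc_sub UNIV g"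
    unfolding loc_sub_eq_fractions by (intro fractions_mono) blast
  show "EXT (fractions (to_fract ` A) (powers (to_fract g))) (loc_sub UNIV g)"
    using ext by (simp add: loc_sub_eq_fractions)
qed

theorem lemma3p5:
  fixes A :: "'b::idom set" and I :: "'i set" and f :: "'i \<Rightarrow> 'b"
  assumes "noetherian_ring TYPE('b)"
    and "normal_domain TYPE('b)"
    and "is_subring A"
    and "EXT (frac_sub A) (UNIV :: 'b fract set)"
    and "\<forall>i\<in>I. f i \<in> A \<and> f i \<noteq> 0"
    and "\<forall>i\<in>I. EXT (loc_sub A (f i)) (loc_sub (UNIV :: 'b set) (f i))"
    and "\<forall>P::'b set. height_one_prime P \<longrightarrow> \<not> (\<forall>i\<in>I. f i \<in> P)"
  shows "EXT (to_fract ` A) (range (to_fract :: 'b \<Rightarrow> 'b fract))"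
proof -
  have ext_K: "EXT (to_fract ` A) UNIV"
    by (rule EXT_image_to_fract_if_EXT_frac_sub[OF assms(3,4)])
  show ?thesis
  proof (rule EXT_if_UNIV_preserves_subring[OF ext_K is_subring_range_to_fract
        image_mono[OF subset_UNIV] fractions_over_range_to_fract[OF order_refl]])
    fix \<delta> D and x :: "'b fract"
    assume \<delta>: "is_derivation (to_fract ` A) \<delta>"
      and D: "is_derivation UNIV D" "\<forall>a\<in>to_fract ` A. D a = \<delta> a"
      and x: "x \<in> range to_fract"
    have "D x \<in> loc_sub UNIV (f i)" if "i \<in> I" for i
    proof -
      have f: "f i \<in> A" "f i \<noteq> 0" using assms(5) that by auto
      show ?thesis
        using EXT_UNIV_preserves_subring[OF EXT_image_to_fract_if_EXT_loc_sub[OF assms(3) f]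
            ext_K is_subring_loc_sub_UNIV[OF f(2)] _
            fractions_over_range_to_fract[OF range_to_fract_subset_loc_sub] \<delta> D]
          assms(6) that x range_to_fract_subset_loc_sub by blast
    qed
    then have "\<forall>i\<in>I. \<exists>n. f i ^ n \<in> conductor (D x)"
      using power_mem_conductor_if_mem_loc_sub assms(5) by blast
    then show "D x \<in> range to_fract"
      using mem_range_to_fract_if_no_height_one_prime[OF assms(1,2,7)] by blast
  qed
qed

end
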